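(* Let $P_n$ be the path on $n\ge 3$ vertices $1,\dots,n$ with edges $e_i=\{i,i+1\}$ ($1\le i\le n-1$), let $f_j=\{j,j+2\}$ ($1\le j\le n-2$), let $B=\{e_1,f_1,e_2,f_2,\dots,e_{n-2},f_{n-2},e_{n-1}\}$ (a basis of the row space of $\mathfrak{D}_2(P_n)$), and let $\mathfrak{D}_{P_n}=\mathfrak{D}_2(P_n)[B,B]$. For $\alpha\in B$, let $\mathfrak{D}_{P_n}(\alpha|\alpha)$ be the matrix obtained from $\mathfrak{D}_{P_n}$ by deleting the row and column indexed by $\alpha$. Then $\det\mathfrak{D}_{P_n}(\alpha|\alpha)=-(n-1)$ if $\alpha$ is a pendant edge of $P_n$ (i.e. $\alpha\in\{e_1,e_{n-1}\}$), and $\det\mathfrak{D}_{P_n}(\alpha|\alpha)=-(2n-3)$ otherwise.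
   Context: For a tree $T$, let $\mathcal{V}_2$ be the set of 2-element vertex subsets (edges regarded as elements of $\mathcal{V}_2$). The 2-Steiner distance matrix $\mathfrak{D}_2(T)$ is indexed by $\mathcal{V}_2$, with entry in row $\{i,j\}$, column $\{k,l\}$ equal to the minimum number of edges of a connected subtree of $T$ whose vertex set contains $i,j,k,l$. $M[B,B]$ denotes the principal submatrix with rows and columns indexed by $B$. *)

theory Defs
  imports "Jordan_Normal_Form.Determinant"
begin

definition path_adj :: "nat \<Rightarrow> nat \<Rightarrow> nat \<Rightarrow> bool" where
  "path_adj n i j \<longleftrightarrow> i \<in> {1..n} \<and> j \<in> {1..n} \<and> (j = i + 1 \<or> i = j + 1)"

text \<open>S is the vertex set of a connected subtree of P_n (induced subgraph connected).
  Such a subtree has card S - 1 edges.\<close>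
definition path_connected_set :: "nat \<Rightarrow> nat set \<Rightarrow> bool" where
  "path_connected_set n S \<longleftrightarrow> S \<noteq> {} \<and> S \<subseteq> {1..n} \<and>
     (\<forall>x\<in>S. \<forall>y\<in>S. (x, y) \<in> {(a, b). a \<in> S \<and> b \<in> S \<and> path_adj n a b}\<^sup>*)"

definition path_steiner :: "nat \<Rightarrow> nat set \<Rightarrow> nat" where
  "path_steiner n X = (LEAST k. \<exists>S. path_connected_set n S \<and> X \<subseteq> S \<and> card S = k + 1)"

text \<open>The ordered basis B = (e_1, f_1, e_2, f_2, ..., f_{n-2}, e_{n-1}), 0-indexed:
  index 2i is e_{i+1} = {i+1,i+2}, index 2i+1 is f_{i+1} = {i+1,i+3}.\<close>
definition basis_elem :: "nat \<Rightarrow> nat set" where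
  "basis_elem t = (if even t then {t div 2 + 1, t div 2 + 2} else {t div 2 + 1, t div 2 + 3})"

definition D_Pn :: "nat \<Rightarrow> int mat" where
  "D_Pn n = mat (2 * n - 3) (2 * n - 3)
     (\<lambda>(a, b). int (path_steiner n (basis_elem a \<union> basis_elem b)))"

end

theory Submission
  imports Defs
begin

text \<open>For basis elements \<open>a \<le> b\<close> of the ordered basis B, the union of the two pairs spans the
  vertex interval from the least vertex of \<open>a\<close> to the largest vertex of \<open>b\<close>. So every entry of
  \<open>D_Pn n\<close>, and of each of its principal submatrices, has the form \<open>p (max i j) + q (min i j)\<close>.
  Conjugating such a max-min matrix with the bidiagonal difference matrix gives an arrow matrix
  whose diagonal entries are the increments of \<open>q - p\<close>, and the Schur complement of its corner
  gives the determinant. Along B every increment of \<open>q - p\<close> equals \<open>-1\<close>. Deleting an interior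
  basis element merges two steps into one with increment \<open>-2\<close>, which turns the value \<open>-(n - 1)\<close>
  into \<open>-(2n - 3)\<close>.\<close>

section \<open>Max-min matrices\<close>

definition max_min_mat :: "nat \<Rightarrow> (nat \<Rightarrow> 'a) \<Rightarrow> (nat \<Rightarrow> 'a) \<Rightarrow> 'a :: plus mat" where
  "max_min_mat N p q = mat N N (\<lambda>(i, j). p (max i j) + q (min i j))"

lemma dim_max_min_mat [simp]:
  "dim_row (max_min_mat N p q) = N" "dim_col (max_min_mat N p q) = N"
  by (simp_all add: max_min_mat_def)

lemma max_min_mat_carrier [simp]: "max_min_mat N p q \<in> carrier_mat N N"
  by (simp add: carrier_matI)

definition backward_diff :: "(nat \<Rightarrow> 'a :: ab_group_add) \<Rightarrow> nat \<Rightarrow> 'a" where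
  "backward_diff f k = f k - f (k - 1)"

lemma sum_backward_diff: "(\<Sum>k\<in>{1..<Suc M}. backward_diff f k) = f M - f 0"
  unfolding backward_diff_def
  by (simp only: One_nat_def sum.shift_bounds_Suc_ivl) (simp add: sum_Suc_diff')

lemma det_unit_lower_triangular:
  fixes A :: "'a :: comm_ring_1 mat"
  assumes "A \<in> carrier_mat N N"
    and "\<And>i j. i < j \<Longrightarrow> j < N \<Longrightarrow> A $$ (i, j) = 0"
    and "\<And>i. i < N \<Longrightarrow> A $$ (i, i) = 1"
  shows "det A = 1"
proof -
  have "det A = prod_list (diag_mat A)"
    using assms(1,2) by (rule det_lower_triangular[rotated])
  also have "\<dots> = 1"
    using assms(1,3) by (simp add: prod_list_diag_prod)
  finally show ?thesis .
qed

definition difference_mat :: "nat \<Rightarrow> 'a :: comm_ring_1 mat" where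
  "difference_mat N = mat N N (\<lambda>(i, j). of_bool (i = j) - of_bool (i = Suc j))"

lemma dim_difference_mat [simp]:
  "dim_row (difference_mat N) = N" "dim_col (difference_mat N) = N"
  by (simp_all add: difference_mat_def)

lemma difference_mat_carrier [simp]: "difference_mat N \<in> carrier_mat N N"
  by (simp add: carrier_matI)

lemma det_difference_mat: "det (difference_mat N) = 1"
  by (rule det_unit_lower_triangular[of _ N]) (auto simp: difference_mat_def)

lemma difference_mat_mult_index:
  assumes "A \<in> carrier_mat N m" and "i < N" and "j < m"
  shows "(difference_mat N * A) $$ (i, j) = A $$ (i, j) - (if 0 < i then A $$ (i - 1, j) else 0)"
proof -
  have "(difference_mat N * A) $$ (i, j) =
      (\<Sum>k\<in>{0..<N}. (of_bool (i = k) - of_bool (i = Suc k)) * A $$ (k, j))"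
    using assms by (simp add: difference_mat_def scalar_prod_def)
  also have "\<dots> = A $$ (i, j) - (if 0 < i then A $$ (i - 1, j) else 0)"
    using \<open>i < N\<close> by (cases i) (simp_all add: left_diff_distrib sum_subtractf of_bool_def
        if_distrib[of "\<lambda>x. x * _"] cong: if_cong)
  finally show ?thesis .
qed

lemma mult_transpose_difference_mat_index:
  assumes "A \<in> carrier_mat m N" and "i < m" and "j < N"
  shows "(A * transpose_mat (difference_mat N)) $$ (i, j) =
    A $$ (i, j) - (if 0 < j then A $$ (i, j - 1) else 0)"
proof -
  have "A * transpose_mat (difference_mat N) = transpose_mat (difference_mat N * transpose_mat A)"
    using assms(1) by (simp add: transpose_mult[of _ N N _ m])
  then have "(A * transpose_mat (difference_mat N)) $$ (i, j) =
      (difference_mat N * transpose_mat A) $$ (j, i)"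
    using assms by (simp add: carrier_matD)
  also have "\<dots> = A $$ (i, j) - (if 0 < j then A $$ (i, j - 1) else 0)"
    using assms by (simp add: difference_mat_mult_index del: index_mult_mat)
  finally show ?thesis .
qed

lemma difference_congruence_max_min_mat_index:
  fixes p q :: "nat \<Rightarrow> 'a :: comm_ring_1"
  assumes "i < N" and "j < N"
  shows "(difference_mat N * max_min_mat N p q * transpose_mat (difference_mat N)) $$ (i, j) =
    (if i = 0 \<and> j = 0 then p 0 + q 0
     else if i = 0 then backward_diff p j
     else if j = 0 then backward_diff p i
     else if i = j then backward_diff q i - backward_diff p i
     else 0)"
proof -
  let ?M = "max_min_mat N p q"
  have "difference_mat N * ?M \<in> carrier_mat N N"
    by (rule mult_carrier_mat[of _ N N]) simp_all
  then have "(difference_mat N * ?M * transpose_mat (difference_mat N)) $$ (i, j) =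
      ?M $$ (i, j) - (if 0 < i then ?M $$ (i - 1, j) else 0)
      - (if 0 < j then ?M $$ (i, j - 1) - (if 0 < i then ?M $$ (i - 1, j - 1) else 0) else 0)"
    using assms by (simp add: mult_transpose_difference_mat_index
        difference_mat_mult_index[of ?M N N] del: index_mult_mat)
  also have "\<dots> = (if i = 0 \<and> j = 0 then p 0 + q 0
     else if i = 0 then backward_diff p j
     else if j = 0 then backward_diff p i
     else if i = j then backward_diff q i - backward_diff p i
     else 0)"
    using assms by (cases i; cases j)
      (auto simp: max_min_mat_def backward_diff_def max_def min_def le_Suc_eq)
  finally show ?thesis .
qed

lemma det_arrow_mat:
  fixes E :: "'a :: field mat"
  assumes E: "E \<in> carrier_mat N N" and "0 < N"
    and off_diag: "\<And>i j. i < N \<Longrightarrow> j < N \<Longrightarrow> 0 < i \<Longrightarrow> 0 < j \<Longrightarrow> i \<noteq> j \<Longrightarrow>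
      E $$ (i, j) = 0"
    and diag: "\<And>i. 0 < i \<Longrightarrow> i < N \<Longrightarrow> E $$ (i, i) \<noteq> 0"
  shows "det E = (E $$ (0, 0) - (\<Sum>k\<in>{1..<N}. E $$ (0, k) * E $$ (k, 0) / E $$ (k, k)))
    * (\<Prod>k\<in>{1..<N}. E $$ (k, k))"
proof -
  txt \<open>Column operations with \<open>K\<close> clear the first column below the corner, so \<open>E * K\<close> is
    upper triangular with the Schur complement of the corner in position \<open>(0, 0)\<close>.\<close>
  define K :: "'a mat" where "K = mat N N (\<lambda>(i, j).
    if i = j then 1 else if j = 0 then - E $$ (i, 0) / E $$ (i, i) else 0)"
  have K: "K \<in> carrier_mat N N"
    by (simp add: K_def)
  have EK: "E * K \<in> carrier_mat N N"
    using E K by (rule mult_carrier_mat)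
  have EK_index: "(E * K) $$ (i, j) = (\<Sum>k\<in>{0..<N}. E $$ (i, k) * K $$ (k, j))"
    if "i < N" and "j < N" for i j
    using that E K by (simp add: scalar_prod_def)
  have first_col: "(E * K) $$ (i, 0) =
      E $$ (i, 0) - (\<Sum>k\<in>{1..<N}. E $$ (i, k) * E $$ (k, 0) / E $$ (k, k))" if "i < N" for i
  proof -
    have "(E * K) $$ (i, 0) =
        E $$ (i, 0) * K $$ (0, 0) + (\<Sum>k\<in>{1..<N}. E $$ (i, k) * K $$ (k, 0))"
      using that \<open>0 < N\<close> by (simp add: EK_index sum.atLeast_Suc_lessThan flip: One_nat_def)
    then show ?thesis
      using \<open>0 < N\<close> by (simp add: K_def sum_negf)
  qed
  have other_cols: "(E * K) $$ (i, j) = E $$ (i, j)" if "i < N" and "j < N" and "0 < j" for i j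
  proof -
    have "(E * K) $$ (i, j) = (\<Sum>k\<in>{0..<N}. E $$ (i, k) * K $$ (k, j))"
      using that(1,2) by (rule EK_index)
    also have "\<dots> = (\<Sum>k\<in>{0..<N}. if j = k then E $$ (i, k) else 0)"
      using that by (intro sum.cong) (auto simp: K_def)
    finally show ?thesis
      using that by simp
  qed
  have first_col_zero: "(E * K) $$ (i, 0) = 0" if "0 < i" and "i < N" for i
  proof -
    have "(\<Sum>k\<in>{1..<N}. E $$ (i, k) * E $$ (k, 0) / E $$ (k, k)) =
        (\<Sum>k\<in>{1..<N}. if k = i then E $$ (i, 0) else 0)"
      using off_diag diag that by (intro sum.cong) auto
    then show ?thesis
      using that by (simp add: first_col)
  qed
  have "upper_triangular (E * K)"
  proof (rule upper_triangularI)
    fix i j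
    assume "j < i" and "i < dim_row (E * K)"
    then have "i < N"
      using E by simp
    with \<open>j < i\<close> show "(E * K) $$ (i, j) = 0"
      using first_col_zero other_cols off_diag by (cases "j = 0") auto
  qed
  then have "det (E * K) = (\<Prod>i\<in>{0..<N}. (E * K) $$ (i, i))"
    using E EK by (simp add: det_upper_triangular prod_list_diag_prod)
  also have "\<dots> = (E * K) $$ (0, 0) * (\<Prod>k\<in>{1..<N}. E $$ (k, k))"
    using \<open>0 < N\<close> other_cols by (simp add: prod.atLeast_Suc_lessThan flip: One_nat_def)
  also have "det (E * K) = det E"
    using det_mult[OF E K] det_unit_lower_triangular[OF K] by (simp add: K_def)
  finally show ?thesis
    using first_col \<open>0 < N\<close> by simp
qed

lemma det_max_min_mat:
  fixes p q :: "nat \<Rightarrow> 'a :: field"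
  assumes "0 < N" and "\<And>k. k \<in> {1..<N} \<Longrightarrow> backward_diff q k \<noteq> backward_diff p k"
  shows "det (max_min_mat N p q) =
    (p 0 + q 0 - (\<Sum>k\<in>{1..<N}. (backward_diff p k)\<^sup>2 / (backward_diff q k - backward_diff p k)))
    * (\<Prod>k\<in>{1..<N}. backward_diff q k - backward_diff p k)" (is "_ = ?rhs")
proof -
  let ?L = "difference_mat N :: 'a mat"
  define E where "E = ?L * max_min_mat N p q * transpose_mat ?L"
  have LM: "?L * max_min_mat N p q \<in> carrier_mat N N"
    by (rule mult_carrier_mat[of _ N N]) simp_all
  then have E: "E \<in> carrier_mat N N"
    unfolding E_def by (rule mult_carrier_mat) simp
  have "det E = det (max_min_mat N p q)"
    unfolding E_def
    by (simp add: det_mult[OF LM] det_mult[of _ N] det_transpose[OF difference_mat_carrier]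
        det_difference_mat)
  moreover have "det E = ?rhs"
    using assms difference_congruence_max_min_mat_index[of _ N _ p q, folded E_def]
    by (subst det_arrow_mat[OF E \<open>0 < N\<close>])
      (auto simp: power2_eq_square intro!: sum.cong prod.cong)
  ultimately show ?thesis
    by simp
qed

lemma det_max_min_mat_one_defect:
  fixes p q :: "nat \<Rightarrow> int"
  assumes "0 < N"
    and regular: "\<And>k. k \<in> {1..<N} - {t} \<Longrightarrow>
      backward_diff p k \<in> {0, 1} \<and> backward_diff q k - backward_diff p k = -1"
    and defect: "t \<in> {1..<N} \<Longrightarrow>
      backward_diff p t = 1 \<and> backward_diff q t - backward_diff p t = -2"
  shows "det (max_min_mat N p q) = (-1) ^ (N - 1) *
    (if t \<in> {1..<N} then 2 * (q 0 + p (N - 1)) - 1 else q 0 + p (N - 1))"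
proof -
  let ?p = "\<lambda>k. rat_of_int (p k)" and ?q = "\<lambda>k. rat_of_int (q k)"
  have diff: "backward_diff (\<lambda>k. rat_of_int (f k)) k = rat_of_int (backward_diff f k)" for f k
    by (simp add: backward_diff_def)
  have gap: "backward_diff ?q k - backward_diff ?p k = (if k = t then -2 else -1)"
    if "k \<in> {1..<N}" for k
    using regular[of k] defect that by (auto simp: diff simp flip: of_int_diff)
  have quotient: "(backward_diff ?p k)\<^sup>2 / (backward_diff ?q k - backward_diff ?p k) =
      (if k = t then 1 / 2 else 0) - backward_diff ?p k" if "k \<in> {1..<N}" for k
    unfolding gap[OF that] using regular[of k] defect that by (auto simp: diff)
  have "map_mat rat_of_int (max_min_mat N p q) = max_min_mat N ?p ?q"
    by (rule eq_matI) (auto simp: max_min_mat_def)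
  then have "rat_of_int (det (max_min_mat N p q)) = det (max_min_mat N ?p ?q)"
    by (metis of_int_hom.hom_det)
  also have "\<dots> = (?p 0 + ?q 0 -
      (\<Sum>k\<in>{1..<N}. (backward_diff ?p k)\<^sup>2 / (backward_diff ?q k - backward_diff ?p k)))
    * (\<Prod>k\<in>{1..<N}. backward_diff ?q k - backward_diff ?p k)"
  proof (rule det_max_min_mat[OF \<open>0 < N\<close>])
    fix k
    assume "k \<in> {1..<N}"
    then show "backward_diff ?q k \<noteq> backward_diff ?p k"
      using gap[of k] by (cases "k = t") auto
  qed
  also have "(\<Sum>k\<in>{1..<N}. (backward_diff ?p k)\<^sup>2 / (backward_diff ?q k - backward_diff ?p k)) =
      (if t \<in> {1..<N} then 1 / 2 else 0) - (?p (N - 1) - ?p 0)"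
    using sum_backward_diff[of ?p "N - 1"] \<open>0 < N\<close> by (simp add: quotient sum_subtractf)
  also have "(\<Prod>k\<in>{1..<N}. backward_diff ?q k - backward_diff ?p k) =
      (\<Prod>k\<in>{1..<N}. - 1 * (if k = t then 2 else 1))"
    by (rule prod.cong) (simp_all add: gap)
  also have "\<dots> = (-1) ^ (N - 1) * (if t \<in> {1..<N} then 2 else 1)"
    by (subst prod.distrib) (simp add: prod.delta')
  finally have "rat_of_int (det (max_min_mat N p q)) = rat_of_int ((-1) ^ (N - 1) *
      (if t \<in> {1..<N} then 2 * (q 0 + p (N - 1)) - 1 else q 0 + p (N - 1)))"
    by (auto simp: field_simps split: if_splits)
  then show ?thesis
    by (simp only: of_int_eq_iff)
qed

definition skip_index :: "nat \<Rightarrow> nat \<Rightarrow> nat" where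
  "skip_index t i = (if i < t then i else Suc i)"

lemma skip_index_diff:
  assumes "0 < k"
  shows "skip_index t k =
    (if k = t then Suc (Suc (skip_index t (k - 1))) else Suc (skip_index t (k - 1)))"
  using assms by (auto simp: skip_index_def)

lemma mat_delete_max_min_mat:
  "mat_delete (max_min_mat (Suc N) p q) t t =
    max_min_mat N (p \<circ> skip_index t) (q \<circ> skip_index t)"
proof -
  have mono: "mono (skip_index t)"
    by (auto simp: mono_def skip_index_def)
  have "skip_index t i < Suc N" if "i < N" for i
    using that by (simp add: skip_index_def)
  then show ?thesis
    by (intro eq_matI) (auto simp: mat_delete_def max_min_mat_def skip_index_def[symmetric]
        max_of_mono[OF mono] min_of_mono[OF mono])
qed

section \<open>Steiner distances in a path\<close>

lemma path_connected_set_atLeastAtMost_subset: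
  assumes "path_connected_set n S" and "x \<in> S" and "y \<in> S" and "x \<le> y"
  shows "{x..y} \<subseteq> S"
proof -
  let ?R = "{(a, b). a \<in> S \<and> b \<in> S \<and> path_adj n a b}"
  have "(x, y) \<in> ?R\<^sup>*"
    using assms unfolding path_connected_set_def by blast
  then have "{min x y..max x y} \<subseteq> S"
  proof (induction rule: rtrancl_induct)
    case base
    then show ?case using \<open>x \<in> S\<close> by auto
  next
    case (step y z)
    then have "z \<in> S" and "z = y + 1 \<or> y = z + 1"
      by (auto simp: path_adj_def)
    then have "{min x z..max x z} \<subseteq> insert z {min x y..max x y}"
      by auto
    with step.IH \<open>z \<in> S\<close> show ?case
      by blast
  qed
  with \<open>x \<le> y\<close> show ?thesis
    by simp
qed

lemma path_connected_set_atLeastAtMost: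
  assumes "1 \<le> lo" and "lo \<le> hi" and "hi \<le> n"
  shows "path_connected_set n {lo..hi}"
proof -
  let ?R = "{(a, b). a \<in> {lo..hi} \<and> b \<in> {lo..hi} \<and> path_adj n a b}"
  have upward: "(x, x + d) \<in> ?R\<^sup>*" if "x \<in> {lo..hi}" and "x + d \<le> hi" for x d
    using \<open>x + d \<le> hi\<close>
  proof (induction d)
    case (Suc d)
    then have "(x + d, x + Suc d) \<in> ?R"
      using \<open>x \<in> {lo..hi}\<close> assms by (auto simp: path_adj_def)
    with Suc show ?case
      by (simp add: rtrancl_into_rtrancl)
  qed simp
  have "sym (?R\<^sup>*)"
    by (rule sym_rtrancl) (auto simp: sym_def path_adj_def)
  have "(x, y) \<in> ?R\<^sup>*" if "x \<in> {lo..hi}" and "y \<in> {lo..hi}" for x y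
  proof (cases "x \<le> y")
    case True
    then show ?thesis
      using upward[of x "y - x"] that by simp
  next
    case False
    then have "(y, x) \<in> ?R\<^sup>*"
      using upward[of y "x - y"] that by simp
    with \<open>sym (?R\<^sup>*)\<close> show ?thesis
      by (rule symD)
  qed
  then show ?thesis
    using assms unfolding path_connected_set_def by auto
qed

lemma path_steiner_eq:
  assumes "lo \<in> X" and "hi \<in> X" and "X \<subseteq> {lo..hi}" and "1 \<le> lo" and "hi \<le> n"
  shows "path_steiner n X = hi - lo"
  unfolding path_steiner_def
proof (rule Least_equality)
  have "lo \<le> hi"
    using assms(1,3) by auto
  then show "\<exists>S. path_connected_set n S \<and> X \<subseteq> S \<and> card S = hi - lo + 1"
    using path_connected_set_atLeastAtMost assms by (intro exI[of _ "{lo..hi}"]) auto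
next
  fix k
  assume "\<exists>S. path_connected_set n S \<and> X \<subseteq> S \<and> card S = k + 1"
  then obtain S where S: "path_connected_set n S" "X \<subseteq> S" "card S = k + 1"
    by blast
  have "lo \<in> S" and "hi \<in> S" and "lo \<le> hi"
    using S(2) assms(1-3) by auto
  then have "{lo..hi} \<subseteq> S"
    by (rule path_connected_set_atLeastAtMost_subset[OF S(1)])
  moreover have "finite S"
    using S(3) by (intro card_ge_0_finite) simp
  ultimately have "card {lo..hi} \<le> card S"
    by (rule card_mono[rotated])
  with S(3) show "hi - lo \<le> k"
    by simp
qed

section \<open>The matrix D_Pn\<close>

definition basis_min :: "nat \<Rightarrow> nat" where
  "basis_min s = s div 2 + 1"

definition basis_max :: "nat \<Rightarrow> nat" where
  "basis_max s = (s + 1) div 2 + 2"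

lemma basis_elem_bounds:
  "basis_min s \<in> basis_elem s" "basis_max s \<in> basis_elem s"
  "basis_elem s \<subseteq> {basis_min s..basis_max s}"
  by (auto simp: basis_elem_def basis_min_def basis_max_def elim!: evenE oddE)

lemma mono_basis_min: "mono basis_min"
  by (auto simp: mono_def basis_min_def div_le_mono)

lemma mono_basis_max: "mono basis_max"
  by (auto simp: mono_def basis_max_def div_le_mono)

lemma basis_max_Suc: "int (basis_max (Suc s)) - int (basis_max s) \<in> {0, 1}"
  by (cases "even s") (auto simp: basis_max_def elim!: evenE oddE)

lemma basis_min_plus_max_Suc:
  "basis_min (Suc s) + basis_max (Suc s) = Suc (basis_min s + basis_max s)"
  by (cases "even s") (auto simp: basis_min_def basis_max_def elim!: evenE oddE)

lemma basis_min_max_Suc_Suc: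
  "basis_min (Suc (Suc s)) = Suc (basis_min s)" "basis_max (Suc (Suc s)) = Suc (basis_max s)"
  by (simp_all add: basis_min_def basis_max_def)

lemma basis_elem_pendant_iff:
  assumes "3 \<le> n" and "t < 2 * n - 3"
  shows "basis_elem t = {1, 2} \<or> basis_elem t = {n - 1, n} \<longleftrightarrow> t = 0 \<or> t = 2 * n - 4"
  using assms
  by (auto simp: basis_elem_def doubleton_eq_iff split: if_splits elim!: evenE oddE; presburger)

lemma D_Pn_eq_max_min_mat:
  assumes "3 \<le> n"
  shows "D_Pn n = max_min_mat (2 * n - 3) (\<lambda>s. int (basis_max s)) (\<lambda>s. - int (basis_min s))"
    (is "_ = ?M")
proof (rule eq_matI)
  fix a b
  assume "a < dim_row ?M" and "b < dim_col ?M"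
  then have ab: "a < 2 * n - 3" "b < 2 * n - 3"
    by simp_all
  let ?X = "basis_elem a \<union> basis_elem b"
  let ?lo = "basis_min (min a b)" and ?hi = "basis_max (max a b)"
  have "basis_elem (min a b) \<subseteq> ?X" "basis_elem (max a b) \<subseteq> ?X"
    by (auto simp: min_def max_def)
  then have "?lo \<in> ?X" "?hi \<in> ?X"
    using basis_elem_bounds by blast+
  have "basis_elem c \<subseteq> {?lo..?hi}" if "c \<in> {a, b}" for c
    using basis_elem_bounds(3)[of c] that monoD[OF mono_basis_min, of "min a b" c]
      monoD[OF mono_basis_max, of c "max a b"] by auto
  then have "?X \<subseteq> {?lo..?hi}"
    by blast
  moreover have "?hi \<le> n"
    using ab assms by (auto simp: basis_max_def max_def)
  ultimately have "path_steiner n ?X = ?hi - ?lo"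
    using \<open>?lo \<in> ?X\<close> \<open>?hi \<in> ?X\<close> by (intro path_steiner_eq) (auto simp: basis_min_def)
  moreover have "?lo \<le> ?hi"
    using \<open>?X \<subseteq> {?lo..?hi}\<close> \<open>?lo \<in> ?X\<close> by auto
  ultimately show "D_Pn n $$ (a, b) = ?M $$ (a, b)"
    using ab by (simp add: D_Pn_def max_min_mat_def of_nat_diff)
qed (simp_all add: D_Pn_def)

lemma mat_delete_D_Pn:
  assumes "3 \<le> n"
  shows "mat_delete (D_Pn n) t t = max_min_mat (2 * n - 4)
    (\<lambda>s. int (basis_max (skip_index t s))) (\<lambda>s. - int (basis_min (skip_index t s)))"
proof -
  have "2 * n - 3 = Suc (2 * n - 4)"
    using assms by simp
  then show ?thesis
    using D_Pn_eq_max_min_mat[OF assms] by (simp add: mat_delete_max_min_mat comp_def)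
qed

lemma backward_diff_basis_skip_index:
  fixes t k :: nat
  defines "p \<equiv> \<lambda>s. int (basis_max (skip_index t s))"
    and "q \<equiv> \<lambda>s. - int (basis_min (skip_index t s))"
  assumes "0 < k"
  shows "k \<noteq> t \<Longrightarrow> backward_diff p k \<in> {0, 1} \<and> backward_diff q k - backward_diff p k = -1"
    and "k = t \<Longrightarrow> backward_diff p k = 1 \<and> backward_diff q k - backward_diff p k = -2"
proof -
  let ?s = "skip_index t (k - 1)"
  show "k \<noteq> t \<Longrightarrow> backward_diff p k \<in> {0, 1} \<and> backward_diff q k - backward_diff p k = -1"
    using basis_max_Suc[of ?s] basis_min_plus_max_Suc[of ?s]
    by (simp add: p_def q_def backward_diff_def skip_index_diff[OF \<open>0 < k\<close>])
  assume "k = t"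
  then have "skip_index t k = Suc (Suc ?s)"
    using skip_index_diff[OF \<open>0 < k\<close>] by simp
  then show "backward_diff p k = 1 \<and> backward_diff q k - backward_diff p k = -2"
    by (simp add: p_def q_def backward_diff_def basis_min_max_Suc_Suc)
qed

lemma det_mat_delete_D_Pn:
  fixes n t :: nat
  defines "p \<equiv> \<lambda>s. int (basis_max (skip_index t s))"
    and "q \<equiv> \<lambda>s. - int (basis_min (skip_index t s))"
    and "N \<equiv> 2 * n - 4"
  assumes "3 \<le> n"
  shows "det (mat_delete (D_Pn n) t t) = (-1) ^ (N - 1) *
    (if t \<in> {1..<N} then 2 * (q 0 + p (N - 1)) - 1 else q 0 + p (N - 1))"
  unfolding mat_delete_D_Pn[OF \<open>3 \<le> n\<close>] p_def q_def N_def
proof (rule det_max_min_mat_one_defect, goal_cases)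
  case 1
  show ?case
    using \<open>3 \<le> n\<close> by simp
next
  case (2 k)
  then show ?case
    using backward_diff_basis_skip_index(1)[of k t] by simp
next
  case 3
  then show ?case
    using backward_diff_basis_skip_index(2)[of t t] by simp
qed

theorem theorem5p13:
  fixes n t :: nat
  assumes "n \<ge> 3" and "t < 2 * n - 3"
  shows "det (mat_delete (D_Pn n) t t) =
           (if basis_elem t = {1, 2} \<or> basis_elem t = {n - 1, n}
            then - (int n - 1) else - (2 * int n - 3))"
proof -
  define N where "N = 2 * n - 4"
  define p where "p s = int (basis_max (skip_index t s))" for s
  define q where "q s = - int (basis_min (skip_index t s))" for s
  have "odd (N - 1)"
    using assms(1) by (simp add: N_def)
  moreover have "q 0 + p (N - 1) = int n - 1"
    using assms by (auto simp: N_def p_def q_def skip_index_def basis_min_def basis_max_def)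
  moreover have "det (mat_delete (D_Pn n) t t) = (-1) ^ (N - 1) *
      (if t \<in> {1..<N} then 2 * (q 0 + p (N - 1)) - 1 else q 0 + p (N - 1))"
    unfolding N_def p_def q_def using det_mat_delete_D_Pn[OF assms(1)] by simp
  ultimately show ?thesis
    using basis_elem_pendant_iff[OF assms] assms(2) by (auto simp: N_def)
qed

end
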